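(* Let $d\ge 1$, let $\Omega=\operatorname{diag}(\omega_j)_{j=1}^d\in\mathbb{R}^{d\times d}$ with all $\omega_j\ge 0$, and let $A\in\mathbb{C}^{d\times d}$ be self-adjoint. Let $0<h\le 1$ and let $\psi_1,\phi\colon\mathbb{R}\to\mathbb{R}$ be even functions satisfying \[ \psi_1(\xi)=\operatorname{sinc}(\xi)\,\phi(\xi)\qquad\text{for all }\xi\in\mathbb{R}. \] Set $\Psi_1=\psi_1(h\Omega)$, $\Phi=\phi(h\Omega)$. For given $q_0,\dot q_0\in\mathbb{C}^d$, define $(q_n,\dot q_n)_{n\ge 0}$ recursively by \begin{align*} q_{n+1} &= \cos(h\Omega) q_n + h\operatorname{sinc}(h\Omega) \dot{q}_n - \tfrac12 h^2 \operatorname{sinc}(h\Omega) \Psi_1 A\Phi q_n,\\ \dot{q}_{n+1} &= -\Omega \sin(h\Omega) q_n + \cos(h\Omega) \dot{q}_n - \tfrac12 h \big( \cos(h\Omega) \Psi_1 A\Phi q_n + \Psi_1 A\Phi q_{n+1}\big). \end{align*} Define \[ \mathcal{H}(q,\dot{q}) = \tfrac12 \|\Omega q\|^2 + \tfrac12 \|\dot{q}\|^2 + \tfrac12 \operatorname{Re}\big((\cos(h\Omega) \Phi q)^* A \Phi q\big) - \tfrac18 h^2 \|\Psi_1 A \Phi q\|^2 . \] Then $\mathcal{H}(q_{n+1},\dot q_{n+1})=\mathcal{H}(q_n,\dot q_n)$ for all $n\ge 0$.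
   Context: $\|\cdot\|$ is the Euclidean norm on $\mathbb{C}^d$ and ${}^*$ denotes conjugate transpose. $\operatorname{sinc}(\xi)=\sin(\xi)/\xi$ for $\xi\ne0$ and $\operatorname{sinc}(0)=1$. For a function $f\colon\mathbb{R}\to\mathbb{R}$, $f(h\Omega)$ denotes the diagonal matrix $\operatorname{diag}(f(h\omega_j))_{j=1}^d$; in particular $\cos(h\Omega),\sin(h\Omega),\operatorname{sinc}(h\Omega)$ are diagonal matrices. The recursion is a trigonometric integrator for $\ddot q=-\Omega^2q-Aq$. *)

theory Defs
  imports "HOL-Analysis.Analysis"
begin

definition sinc :: "real \<Rightarrow> real" where
  "sinc x = (if x = 0 then 1 else sin x / x)"

definition diagm :: "('n::finite \<Rightarrow> real) \<Rightarrow> complex^'n^'n" where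
  "diagm w = (\<chi> i j. if i = j then complex_of_real (w i) else 0)"

text \<open>f(h \<Omega>) for \<Omega> = diag(\<omega>_j): the diagonal matrix diag(f(h \<omega>_j)).\<close>
definition fun_diag :: "(real \<Rightarrow> real) \<Rightarrow> real \<Rightarrow> ('n::finite \<Rightarrow> real) \<Rightarrow> complex^'n^'n" where
  "fun_diag f h \<omega> = diagm (\<lambda>j. f (h * \<omega> j))"

definition cdot :: "complex^'n::finite \<Rightarrow> complex^'n \<Rightarrow> complex" where
  "cdot x y = (\<Sum>i\<in>UNIV. cnj (x $ i) * y $ i)"

definition self_adjoint_mat :: "complex^'n::finite^'n \<Rightarrow> bool" where
  "self_adjoint_mat A \<longleftrightarrow> (\<forall>i j. A $ i $ j = cnj (A $ j $ i))"

definition Hmod :: "('n::finite \<Rightarrow> real) \<Rightarrow> complex^'n^'n \<Rightarrow> (real \<Rightarrow> real) \<Rightarrow> (real \<Rightarrow> real)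
    \<Rightarrow> real \<Rightarrow> complex^'n \<Rightarrow> complex^'n \<Rightarrow> real" where
  "Hmod \<omega> A psi1 phi h q qd =
     (let Om = diagm \<omega>; Psi1 = fun_diag psi1 h \<omega>; Phi = fun_diag phi h \<omega>; C = fun_diag cos h \<omega> in
      1/2 * (norm (Om *v q))^2 + 1/2 * (norm qd)^2
      + 1/2 * Re (cdot (C *v (Phi *v q)) (A *v (Phi *v q)))
      - 1/8 * h^2 * (norm (Psi1 *v (A *v (Phi *v q))))^2)"

end

theory Submission
  imports Defs
begin

(* Write g = \<Psi>\<^sub>1 A \<Phi> q and pass to the half-step velocities
   v = qd\<^sub>n - (h/2) g\<^sub>n and w = qd\<^sub>n\<^sub>+\<^sub>1 + (h/2) g\<^sub>n\<^sub>+\<^sub>1.  In these variables the scheme reads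
   q\<^sub>n\<^sub>+\<^sub>1 = cos(h\<Omega>) q\<^sub>n + h sinc(h\<Omega>) v and w = cos(h\<Omega>) v - \<Omega> sin(h\<Omega>) q\<^sub>n, i.e. it maps
   (\<Omega> q\<^sub>n, v) to (\<Omega> q\<^sub>n\<^sub>+\<^sub>1, w) by the exact rotation with angles h\<omega>\<^sub>j, so
   |\<Omega> q|^2 + |velocity|^2 is conserved.  Completing the square, 2 H equals this quantity
   plus a coupling term h Re(v* g) + Re((cos(h\<Omega>) \<Phi> q)* A \<Phi> q); applying h sinc(h\<Omega>) \<Phi>
   to the two step relations turns the coupling terms before and after the step into
   Re((\<Phi> q\<^sub>n\<^sub>+\<^sub>1)* A \<Phi> q\<^sub>n) and Re((\<Phi> q\<^sub>n)* A \<Phi> q\<^sub>n\<^sub>+\<^sub>1), which agree because A is self-adjoint. *)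

lemma diagm_mult_vec_nth [simp]: "(diagm e *v x) $ i = of_real (e i) * x $ i"
  unfolding diagm_def matrix_vector_mult_def
  by (simp add: if_distrib[where f="\<lambda>z. z * _"] cong: if_cong)

lemma fun_diag_mult_vec_nth [simp]:
  "(fun_diag f h \<omega> *v x) $ i = of_real (f (h * \<omega> i)) * x $ i"
  by (simp add: fun_diag_def)

lemma matrix_vector_mult_scaleR_right:
  fixes A :: "'a::real_algebra_1^'n::finite^'m"
  shows "A *v (c *\<^sub>R x) = c *\<^sub>R (A *v x)"
  by (simp add: matrix_vector_mult_def vec_eq_iff scaleR_sum_right)

lemma Re_cdot: "Re (cdot x y) = x \<bullet> y"
  by (simp add: cdot_def inner_vec_def inner_complex_def Re_sum)

lemma inner_diagm_commute: "(diagm e *v x) \<bullet> y = x \<bullet> (diagm e *v y)"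
  by (simp add: inner_vec_def inner_complex_def algebra_simps)

lemma cdot_self_adjoint:
  assumes "self_adjoint_mat A"
  shows "cdot x (A *v y) = cdot (A *v x) y"
proof -
  have cnj_A: "cnj (A$i$j) = A$j$i" for i j
    using assms unfolding self_adjoint_mat_def by (metis complex_cnj_cnj)
  have "cdot (A *v x) y = (\<Sum>i\<in>UNIV. \<Sum>j\<in>UNIV. A$j$i * cnj (x$j) * y$i)"
    unfolding cdot_def matrix_vector_mult_def by (simp add: cnj_sum sum_distrib_right cnj_A)
  also have "\<dots> = (\<Sum>j\<in>UNIV. \<Sum>i\<in>UNIV. A$j$i * cnj (x$j) * y$i)"
    by (rule sum.swap)
  also have "\<dots> = cdot x (A *v y)"
    unfolding cdot_def matrix_vector_mult_def by (simp add: sum_distrib_left algebra_simps)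
  finally show ?thesis by simp
qed

lemma self_adjoint_mat_inner_commute:
  assumes "self_adjoint_mat A"
  shows "x \<bullet> (A *v y) = y \<bullet> (A *v x)"
  by (metis Re_cdot cdot_self_adjoint[OF assms] inner_commute)

lemma power2_norm_rotation:
  fixes a b :: "'a::real_inner"
  shows "(norm (c *\<^sub>R a + s *\<^sub>R b))\<^sup>2 + (norm (c *\<^sub>R b - s *\<^sub>R a))\<^sup>2
    = (c\<^sup>2 + s\<^sup>2) * ((norm a)\<^sup>2 + (norm b)\<^sup>2)"
  unfolding power2_norm_eq_inner
  by (simp add: inner_add inner_diff inner_commute[of b a] power2_eq_square algebra_simps)

lemma power2_norm_vec: "(norm (x :: 'a::real_inner^'n::finite))\<^sup>2 = (\<Sum>i\<in>UNIV. (norm (x $ i))\<^sup>2)"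
  unfolding power2_norm_eq_inner by (simp add: inner_vec_def)

lemma power2_norm_diagm_rotation:
  fixes x y :: "complex^'n::finite"
  assumes "\<And>j. (c j)\<^sup>2 + (s j)\<^sup>2 = 1"
  shows "(norm (diagm c *v x + diagm s *v y))\<^sup>2 + (norm (diagm c *v y - diagm s *v x))\<^sup>2
    = (norm x)\<^sup>2 + (norm y)\<^sup>2"
  using power2_norm_rotation[of "c _" "x $ _" "s _" "y $ _"]
  by (simp add: power2_norm_vec assms scaleR_conv_of_real flip: sum.distrib)

lemma power2_norm_diff_scaleR:
  fixes a g :: "'a::real_inner"
  shows "(norm (a - t *\<^sub>R g))\<^sup>2 + 2 * t * ((a - t *\<^sub>R g) \<bullet> g) = (norm a)\<^sup>2 - t\<^sup>2 * (norm g)\<^sup>2"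
  unfolding power2_norm_eq_inner
  by (simp add: inner_diff inner_commute[of g a] power2_eq_square algebra_simps)

lemma x_mult_sinc: "x * sinc x = sin x"
  by (simp add: sinc_def)

lemma trig_step_norm_conservation:
  fixes Q v :: "complex^'n::finite"
  assumes Q': "Q' = fun_diag cos h \<omega> *v Q + h *\<^sub>R (fun_diag sinc h \<omega> *v v)"
    and w: "w = fun_diag cos h \<omega> *v v - diagm \<omega> *v (fun_diag sin h \<omega> *v Q)"
  shows "(norm (diagm \<omega> *v Q'))\<^sup>2 + (norm w)\<^sup>2 = (norm (diagm \<omega> *v Q))\<^sup>2 + (norm v)\<^sup>2"
proof -
  have "diagm \<omega> *v Q' = fun_diag cos h \<omega> *v (diagm \<omega> *v Q) + fun_diag sin h \<omega> *v v"
    using x_mult_sinc[of "h * \<omega> _"]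
    by (simp add: Q' vec_eq_iff scaleR_conv_of_real[where 'a=complex] algebra_simps flip: of_real_mult)
  moreover have "w = fun_diag cos h \<omega> *v v - fun_diag sin h \<omega> *v (diagm \<omega> *v Q)"
    by (simp add: w vec_eq_iff algebra_simps)
  ultimately show ?thesis
    unfolding fun_diag_def by (simp add: power2_norm_diagm_rotation)
qed

lemma trig_step_filtered_velocities:
  fixes Q v :: "complex^'n::finite"
  assumes Q': "Q' = fun_diag cos h \<omega> *v Q + h *\<^sub>R (fun_diag sinc h \<omega> *v v)"
    and w: "w = fun_diag cos h \<omega> *v v - diagm \<omega> *v (fun_diag sin h \<omega> *v Q)"
  shows "h *\<^sub>R (fun_diag sinc h \<omega> *v (fun_diag phi h \<omega> *v v))
      = fun_diag phi h \<omega> *v Q' - fun_diag cos h \<omega> *v (fun_diag phi h \<omega> *v Q)"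
    and "h *\<^sub>R (fun_diag sinc h \<omega> *v (fun_diag phi h \<omega> *v w))
      = fun_diag cos h \<omega> *v (fun_diag phi h \<omega> *v Q') - fun_diag phi h \<omega> *v Q"
proof -
  show "h *\<^sub>R (fun_diag sinc h \<omega> *v (fun_diag phi h \<omega> *v v))
      = fun_diag phi h \<omega> *v Q' - fun_diag cos h \<omega> *v (fun_diag phi h \<omega> *v Q)"
    by (simp add: Q' vec_eq_iff scaleR_conv_of_real[where 'a=complex] algebra_simps)
  have "p * (cos x)\<^sup>2 + x * sinc x * (p * sin x) = p" for p x :: real
    unfolding x_mult_sinc using sin_cos_squared_add[of x] by algebra
  note this[of "phi (h * \<omega> _)" "h * \<omega> _"]
  from arg_cong[OF this, of "\<lambda>r. Q $ _ * of_real r"]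
  show "h *\<^sub>R (fun_diag sinc h \<omega> *v (fun_diag phi h \<omega> *v w))
      = fun_diag cos h \<omega> *v (fun_diag phi h \<omega> *v Q') - fun_diag phi h \<omega> *v Q"
    by (simp add: Q' w vec_eq_iff scaleR_conv_of_real[where 'a=complex] algebra_simps power2_eq_square)
qed

lemma inner_fun_diag_sinc_mult:
  assumes "\<forall>x. psi1 x = sinc x * phi x"
  shows "h * (v \<bullet> (fun_diag psi1 h \<omega> *v a))
    = (h *\<^sub>R (fun_diag sinc h \<omega> *v (fun_diag phi h \<omega> *v v))) \<bullet> a"
proof -
  have "fun_diag psi1 h \<omega> *v a = fun_diag phi h \<omega> *v (fun_diag sinc h \<omega> *v a)"
    by (simp add: vec_eq_iff assms algebra_simps)
  then show ?thesis
    unfolding fun_diag_def by (simp add: inner_diagm_commute)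
qed

lemma Hmod_shifted_velocity:
  fixes \<omega> :: "'n::finite \<Rightarrow> real" and A :: "complex^'n^'n" and psi1 phi :: "real \<Rightarrow> real"
    and h t :: real and q qd :: "complex^'n"
  defines "u \<equiv> fun_diag phi h \<omega> *v q"
    and "g \<equiv> fun_diag psi1 h \<omega> *v (A *v (fun_diag phi h \<omega> *v q))"
  assumes "t\<^sup>2 = (h / 2)\<^sup>2"
  shows "2 * Hmod \<omega> A psi1 phi h q qd
    = (norm (diagm \<omega> *v q))\<^sup>2 + (norm (qd - t *\<^sub>R g))\<^sup>2 + 2 * t * ((qd - t *\<^sub>R g) \<bullet> g)
      + (fun_diag cos h \<omega> *v u) \<bullet> (A *v u)"
  using power2_norm_diff_scaleR[of qd t g]
  unfolding Hmod_def Let_def Re_cdot assms(3) u_def g_def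
  by (simp add: power2_eq_square)

theorem theorem1:
  fixes \<omega> :: "'n::finite \<Rightarrow> real"
    and A :: "complex^'n^'n"
    and h :: real
    and psi1 phi :: "real \<Rightarrow> real"
    and q qd :: "nat \<Rightarrow> complex^'n"
  assumes omega_nonneg: "\<forall>j. \<omega> j \<ge> 0"
    and A_sa: "self_adjoint_mat A"
    and h_pos: "0 < h" and h_le: "h \<le> 1"
    and psi1_even: "\<forall>x. psi1 (- x) = psi1 x"
    and phi_even: "\<forall>x. phi (- x) = phi x"
    and psi1_phi: "\<forall>x. psi1 x = sinc x * phi x"
    and q_step: "\<forall>n. q (Suc n) =
        fun_diag cos h \<omega> *v q n + h *\<^sub>R (fun_diag sinc h \<omega> *v qd n)
        - (1/2 * h^2) *\<^sub>R (fun_diag sinc h \<omega> *v (fun_diag psi1 h \<omega> *v (A *v (fun_diag phi h \<omega> *v q n))))"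
    and qd_step: "\<forall>n. qd (Suc n) =
        - (diagm \<omega> *v (fun_diag sin h \<omega> *v q n)) + fun_diag cos h \<omega> *v qd n
        - (1/2 * h) *\<^sub>R (fun_diag cos h \<omega> *v (fun_diag psi1 h \<omega> *v (A *v (fun_diag phi h \<omega> *v q n)))
                         + fun_diag psi1 h \<omega> *v (A *v (fun_diag phi h \<omega> *v q (Suc n))))"
  shows "\<forall>n. Hmod \<omega> A psi1 phi h (q (Suc n)) (qd (Suc n)) = Hmod \<omega> A psi1 phi h (q n) (qd n)"
proof
  fix n
  let ?C = "fun_diag cos h \<omega>"
  define u where "u k = fun_diag phi h \<omega> *v q k" for k
  define g where "g k = fun_diag psi1 h \<omega> *v (A *v u k)" for k
  define v where "v = qd n - (h / 2) *\<^sub>R g n"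
  define w where "w = qd (Suc n) - (- h / 2) *\<^sub>R g (Suc n)"
  have q_half: "q (Suc n) = ?C *v q n + h *\<^sub>R (fun_diag sinc h \<omega> *v v)"
    using q_step
    by (simp add: v_def g_def u_def matrix_vector_mult_scaleR_right algebra_simps power2_eq_square)
  have w_half: "w = ?C *v v - diagm \<omega> *v (fun_diag sin h \<omega> *v q n)"
    using qd_step by (simp add: w_def v_def g_def u_def matrix_vector_mult_scaleR_right algebra_simps)
  have coupling: "h * (v \<bullet> g n) = (u (Suc n) - ?C *v u n) \<bullet> (A *v u n)"
    "h * (w \<bullet> g (Suc n)) = (?C *v u (Suc n) - u n) \<bullet> (A *v u (Suc n))"
    unfolding g_def inner_fun_diag_sinc_mult[OF psi1_phi]
      trig_step_filtered_velocities[OF q_half w_half] u_def by simp_all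
  have "2 * Hmod \<omega> A psi1 phi h (q n) (qd n)
      = (norm (diagm \<omega> *v q n))\<^sup>2 + (norm v)\<^sup>2 + h * (v \<bullet> g n) + (?C *v u n) \<bullet> (A *v u n)"
    using Hmod_shifted_velocity[where h = h and t = "h / 2"] by (simp add: v_def g_def u_def)
  moreover have "2 * Hmod \<omega> A psi1 phi h (q (Suc n)) (qd (Suc n))
      = (norm (diagm \<omega> *v q (Suc n)))\<^sup>2 + (norm w)\<^sup>2 - h * (w \<bullet> g (Suc n))
        + (?C *v u (Suc n)) \<bullet> (A *v u (Suc n))"
    using Hmod_shifted_velocity[where h = h and t = "- h / 2"] by (simp add: w_def g_def u_def)
  moreover have "u n \<bullet> (A *v u (Suc n)) = u (Suc n) \<bullet> (A *v u n)"
    using A_sa by (rule self_adjoint_mat_inner_commute)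
  ultimately show "Hmod \<omega> A psi1 phi h (q (Suc n)) (qd (Suc n)) = Hmod \<omega> A psi1 phi h (q n) (qd n)"
    using trig_step_norm_conservation[OF q_half w_half] coupling by (simp add: inner_diff_left)
qed

end
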